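(* For every local category $\mathbb{C}$, $\mathbf{R}[\mathbb{C}]$ is a restriction category.
   Context: Composition is diagrammatic. A local category is a category $\mathbb{C}$ with, for each object $M$, an object $\mathsf{L}M$ and a morphism $\eta_M:M\to\mathsf{L}M$ such that (L.1) $\mathsf{L}\mathsf{L}M=\mathsf{L}M$ and $\eta_{\mathsf{L}M}=\mathrm{id}$; (L.2) each $\eta_M$ is monic; (L.3) for every $M$ and $f:N\to\mathsf{L}M$ a pullback of $\eta_M$ along $f$ exists, with leg $m:P\to N$, such that $\mathsf{L}P=\mathsf{L}N$ and $m\eta_N=\eta_P$. An object $M$ is total if $M=\mathsf{L}M$ and $\eta_M=\mathrm{id}_M$. $\mathbf{R}[\mathbb{C}]$ has as objects the total objects of $\mathbb{C}$. A morphism $M\to N$ is an isomorphism class of pairs $(U,f)$ with $U$ an object of $\mathbb{C}$ satisfying $\mathsf{L}U=M$ and $f:U\to N$ a morphism, where $(U,f)$ and $(V,g)$ are isomorphic if there is an isomorphism $\varphi:U\to V$ with $\varphi\eta_V=\eta_U$ and $\varphi g=f$. The identity on $M$ is $(M,\mathrm{id}_M)$. The composite of $(U,f):M\to N$ and $(V,g):N\to P$ is $(W,\pi_Vg)$, where $W$ with projections $\pi_V:W\to V$ and $W\to U$ is a pullback of $\eta_V$ along $f$. The restriction of $(U,f)$ is $\overline{(U,f)}=(U,\eta_U):M\to M$. A restriction category is a category with an assignment to each $f:A\to B$ of $\bar f:A\to A$ such that: (R.1) $\bar ff=f$; (R.2) $\bar f\bar g=\bar g\bar f$ for $f:A\to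 B$, $g:A\to C$; (R.3) $\bar g\bar f=\overline{\bar gf}$ for $f:A\to B$, $g:A\to C$; (R.4) $f\bar g=\overline{fg}f$ for $f:A\to B$, $g:B\to C$. *)

theory Defs
  imports Main
begin

text \<open>Categories with diagrammatic composition: Comp f g means "first f, then g".\<close>

record ('o, 'm) cat =
  Ob   :: "'o set"
  Ar   :: "'m set"
  Dom  :: "'m \<Rightarrow> 'o"
  Cod  :: "'m \<Rightarrow> 'o"
  Id   :: "'o \<Rightarrow> 'm"
  Comp :: "'m \<Rightarrow> 'm \<Rightarrow> 'm"

definition hom :: "('o, 'm) cat \<Rightarrow> 'm \<Rightarrow> 'o \<Rightarrow> 'o \<Rightarrow> bool" where
  "hom C f A B \<longleftrightarrow> f \<in> Ar C \<and> Dom C f = A \<and> Cod C f = B"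

definition category :: "('o, 'm) cat \<Rightarrow> bool" where
  "category C \<longleftrightarrow>
     (\<forall>f \<in> Ar C. Dom C f \<in> Ob C \<and> Cod C f \<in> Ob C) \<and>
     (\<forall>A \<in> Ob C. hom C (Id C A) A A) \<and>
     (\<forall>f \<in> Ar C. \<forall>g \<in> Ar C. Cod C f = Dom C g \<longrightarrow> hom C (Comp C f g) (Dom C f) (Cod C g)) \<and>
     (\<forall>f \<in> Ar C. Comp C (Id C (Dom C f)) f = f \<and> Comp C f (Id C (Cod C f)) = f) \<and>
     (\<forall>f \<in> Ar C. \<forall>g \<in> Ar C. \<forall>h \<in> Ar C. Cod C f = Dom C g \<longrightarrow> Cod C g = Dom C h \<longrightarrow>
        Comp C (Comp C f g) h = Comp C f (Comp C g h))"

definition monic :: "('o, 'm) cat \<Rightarrow> 'm \<Rightarrow> bool" where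
  "monic C h \<longleftrightarrow> h \<in> Ar C \<and>
     (\<forall>g k. g \<in> Ar C \<longrightarrow> k \<in> Ar C \<longrightarrow> Cod C g = Dom C h \<longrightarrow> Cod C k = Dom C h \<longrightarrow>
        Dom C g = Dom C k \<longrightarrow> Comp C g h = Comp C k h \<longrightarrow> g = k)"

definition iso :: "('o, 'm) cat \<Rightarrow> 'm \<Rightarrow> bool" where
  "iso C f \<longleftrightarrow> f \<in> Ar C \<and> (\<exists>g. hom C g (Cod C f) (Dom C f) \<and>
     Comp C f g = Id C (Dom C f) \<and> Comp C g f = Id C (Cod C f))"

definition is_pullback :: "('o, 'm) cat \<Rightarrow> 'm \<Rightarrow> 'm \<Rightarrow> 'o \<Rightarrow> 'm \<Rightarrow> 'm \<Rightarrow> bool" where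
  "is_pullback C h f P p q \<longleftrightarrow>
     P \<in> Ob C \<and> hom C p P (Dom C f) \<and> hom C q P (Dom C h) \<and>
     Comp C p f = Comp C q h \<and>
     (\<forall>Q x y. Q \<in> Ob C \<longrightarrow> hom C x Q (Dom C f) \<longrightarrow> hom C y Q (Dom C h) \<longrightarrow>
        Comp C x f = Comp C y h \<longrightarrow>
        (\<exists>!u. hom C u Q P \<and> Comp C u p = x \<and> Comp C u q = y))"

definition local_category :: "('o, 'm) cat \<Rightarrow> ('o \<Rightarrow> 'o) \<Rightarrow> ('o \<Rightarrow> 'm) \<Rightarrow> bool" where
  "local_category C L \<eta> \<longleftrightarrow> category C \<and>
     (\<forall>M \<in> Ob C. L M \<in> Ob C \<and> hom C (\<eta> M) M (L M)) \<and>
     (\<forall>M \<in> Ob C. L (L M) = L M \<and> \<eta> (L M) = Id C (L M)) \<and>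
     (\<forall>M \<in> Ob C. monic C (\<eta> M)) \<and>
     (\<forall>M \<in> Ob C. \<forall>f. f \<in> Ar C \<longrightarrow> Cod C f = L M \<longrightarrow>
        (\<exists>P m m'. is_pullback C (\<eta> M) f P m m' \<and> L P = L (Dom C f) \<and>
                  Comp C m (\<eta> (Dom C f)) = \<eta> P))"

definition total :: "('o, 'm) cat \<Rightarrow> ('o \<Rightarrow> 'o) \<Rightarrow> ('o \<Rightarrow> 'm) \<Rightarrow> 'o \<Rightarrow> bool" where
  "total C L \<eta> M \<longleftrightarrow> M \<in> Ob C \<and> L M = M \<and> \<eta> M = Id C M"

text \<open>Pairs (U, f) with f : U \<rightarrow> N, N total (then L U is automatically total).\<close>
definition rpair :: "('o, 'm) cat \<Rightarrow> ('o \<Rightarrow> 'o) \<Rightarrow> ('o \<Rightarrow> 'm) \<Rightarrow> 'o \<times> 'm \<Rightarrow> bool" where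
  "rpair C L \<eta> p \<longleftrightarrow> fst p \<in> Ob C \<and> hom C (snd p) (fst p) (Cod C (snd p)) \<and>
     total C L \<eta> (Cod C (snd p))"

definition rpair_iso :: "('o, 'm) cat \<Rightarrow> ('o \<Rightarrow> 'm) \<Rightarrow> 'o \<times> 'm \<Rightarrow> 'o \<times> 'm \<Rightarrow> bool" where
  "rpair_iso C \<eta> p q \<longleftrightarrow> (\<exists>\<phi>. iso C \<phi> \<and> hom C \<phi> (fst p) (fst q) \<and>
      Comp C \<phi> (\<eta> (fst q)) = \<eta> (fst p) \<and> Comp C \<phi> (snd q) = snd p)"

definition rcls :: "('o, 'm) cat \<Rightarrow> ('o \<Rightarrow> 'o) \<Rightarrow> ('o \<Rightarrow> 'm) \<Rightarrow> 'o \<times> 'm \<Rightarrow> ('o \<times> 'm) set" where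
  "rcls C L \<eta> p = {q. rpair C L \<eta> q \<and> L (fst q) = L (fst p) \<and> rpair_iso C \<eta> q p}"

definition rrep :: "('o, 'm) cat \<Rightarrow> ('o \<Rightarrow> 'o) \<Rightarrow> ('o \<Rightarrow> 'm) \<Rightarrow> ('o \<times> 'm) set \<Rightarrow> 'o \<times> 'm" where
  "rrep C L \<eta> a = (SOME p. rpair C L \<eta> p \<and> a = rcls C L \<eta> p)"

text \<open>Composite of (U,f) and (V,g): (W, pi_V g) where W is a pullback of eta_V along f
  as provided by (L.3), i.e. with L W = L U and pi_U eta_U = eta_W.\<close>
definition R_cat :: "('o, 'm) cat \<Rightarrow> ('o \<Rightarrow> 'o) \<Rightarrow> ('o \<Rightarrow> 'm) \<Rightarrow> ('o, ('o \<times> 'm) set) cat" where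
  "R_cat C L \<eta> = \<lparr>
     Ob = {M. total C L \<eta> M},
     Ar = {rcls C L \<eta> p | p. rpair C L \<eta> p},
     Dom = (\<lambda>a. L (fst (rrep C L \<eta> a))),
     Cod = (\<lambda>a. Cod C (snd (rrep C L \<eta> a))),
     Id = (\<lambda>M. rcls C L \<eta> (M, Id C M)),
     Comp = (\<lambda>a b.
        let (U, f) = rrep C L \<eta> a; (V, g) = rrep C L \<eta> b;
            (W, pU, pV) = (SOME (W, pU, pV). is_pullback C (\<eta> V) f W pU pV \<and>
                              L W = L U \<and> Comp C pU (\<eta> U) = \<eta> W)
        in rcls C L \<eta> (W, Comp C pV g)) \<rparr>"

definition R_rst :: "('o, 'm) cat \<Rightarrow> ('o \<Rightarrow> 'o) \<Rightarrow> ('o \<Rightarrow> 'm) \<Rightarrow> ('o \<times> 'm) set \<Rightarrow> ('o \<times> 'm) set" where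
  "R_rst C L \<eta> a = (let (U, f) = rrep C L \<eta> a in rcls C L \<eta> (U, \<eta> U))"

definition restriction_category :: "('o, 'm) cat \<Rightarrow> ('m \<Rightarrow> 'm) \<Rightarrow> bool" where
  "restriction_category C rst \<longleftrightarrow> category C \<and>
     (\<forall>f \<in> Ar C. hom C (rst f) (Dom C f) (Dom C f)) \<and>
     (\<forall>f \<in> Ar C. Comp C (rst f) f = f) \<and>
     (\<forall>f \<in> Ar C. \<forall>g \<in> Ar C. Dom C f = Dom C g \<longrightarrow>
        Comp C (rst f) (rst g) = Comp C (rst g) (rst f)) \<and>
     (\<forall>f \<in> Ar C. \<forall>g \<in> Ar C. Dom C f = Dom C g \<longrightarrow>
        Comp C (rst g) (rst f) = rst (Comp C (rst g) f)) \<and>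
     (\<forall>f \<in> Ar C. \<forall>g \<in> Ar C. Cod C f = Dom C g \<longrightarrow>
        Comp C f (rst g) = Comp C (rst (Comp C f g)) f)"

end

theory Submission
  imports Defs
begin

text \<open>
  A pullback is unique up
  to an isomorphism commuting with its legs, and this isomorphism then also commutes with the
  \<eta>'s, so the composite depends neither on the representatives nor on the chosen pullback.
  The unit laws come from pullbacks along identities, and associativity from the pasting lemma,
  since a pullback Z as in (L.3) satisfies \<eta>_Z = z_V \<eta>_V.
  For the restriction structure the point is that \<eta>_U is monic: if a : W \<rightarrow> U satisfies
  a \<eta>_U = \<eta>_W, the pullback of \<eta>_U along \<eta>_W is W itself, with legs id and a. This gives
  (R.1) and (R.4); (R.2) is the symmetry of the pullback of \<eta>_V along \<eta>_U, and (R.3) is the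
  condition m \<eta>_N = \<eta>_P of (L.3).
\<close>

section \<open>Isomorphisms and pullbacks\<close>

locale diagrammatic_category =
  fixes C :: "('o, 'm) cat"
  assumes category: "category C"
begin

abbreviation arr_comp :: "'m \<Rightarrow> 'm \<Rightarrow> 'm" (infixr "\<cdot>" 70)
  where "f \<cdot> g \<equiv> Comp C f g"

lemma dom_in_Ob [simp]: "f \<in> Ar C \<Longrightarrow> Dom C f \<in> Ob C"
  and cod_in_Ob [simp]: "f \<in> Ar C \<Longrightarrow> Cod C f \<in> Ob C"
  and id_in_Ar [simp]: "A \<in> Ob C \<Longrightarrow> Id C A \<in> Ar C"
  and dom_id [simp]: "A \<in> Ob C \<Longrightarrow> Dom C (Id C A) = A"
  and cod_id [simp]: "A \<in> Ob C \<Longrightarrow> Cod C (Id C A) = A"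
  and comp_in_Ar [simp]: "f \<in> Ar C \<Longrightarrow> g \<in> Ar C \<Longrightarrow> Cod C f = Dom C g \<Longrightarrow> f \<cdot> g \<in> Ar C"
  and dom_comp [simp]: "f \<in> Ar C \<Longrightarrow> g \<in> Ar C \<Longrightarrow> Cod C f = Dom C g \<Longrightarrow> Dom C (f \<cdot> g) = Dom C f"
  and cod_comp [simp]: "f \<in> Ar C \<Longrightarrow> g \<in> Ar C \<Longrightarrow> Cod C f = Dom C g \<Longrightarrow> Cod C (f \<cdot> g) = Cod C g"
  and comp_id_left [simp]: "f \<in> Ar C \<Longrightarrow> Dom C f = A \<Longrightarrow> Id C A \<cdot> f = f"
  and comp_id_right [simp]: "f \<in> Ar C \<Longrightarrow> Cod C f = A \<Longrightarrow> f \<cdot> Id C A = f"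
  and comp_assoc [simp]: "f \<in> Ar C \<Longrightarrow> g \<in> Ar C \<Longrightarrow> h \<in> Ar C \<Longrightarrow>
    Cod C f = Dom C g \<Longrightarrow> Cod C g = Dom C h \<Longrightarrow> (f \<cdot> g) \<cdot> h = f \<cdot> (g \<cdot> h)"
  using category unfolding category_def hom_def by blast+

lemma isoI:
  assumes "\<phi> \<in> Ar C" "\<psi> \<in> Ar C" "Dom C \<psi> = Cod C \<phi>" "Cod C \<psi> = Dom C \<phi>"
    and "\<phi> \<cdot> \<psi> = Id C (Dom C \<phi>)" "\<psi> \<cdot> \<phi> = Id C (Cod C \<phi>)"
  shows "iso C \<phi>"
  using assms unfolding iso_def hom_def by blast

lemma isoE:
  assumes "iso C \<phi>"
  obtains \<psi> where "\<psi> \<in> Ar C" "Dom C \<psi> = Cod C \<phi>" "Cod C \<psi> = Dom C \<phi>"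
    "\<phi> \<cdot> \<psi> = Id C (Dom C \<phi>)" "\<psi> \<cdot> \<phi> = Id C (Cod C \<phi>)"
  using assms unfolding iso_def hom_def by blast

lemma iso_in_Ar: "iso C \<phi> \<Longrightarrow> \<phi> \<in> Ar C"
  unfolding iso_def by blast

lemma iso_id: "A \<in> Ob C \<Longrightarrow> iso C (Id C A)"
  by (rule isoI[of _ "Id C A"]) auto

lemma comp_left_inverse_cancel:
  assumes "\<psi> \<cdot> \<phi> = Id C (Dom C g)" "\<psi> \<in> Ar C" "\<phi> \<in> Ar C" "g \<in> Ar C"
    and "Cod C \<psi> = Dom C \<phi>" "Cod C \<phi> = Dom C g"
  shows "\<psi> \<cdot> (\<phi> \<cdot> g) = g"
proof -
  have "\<psi> \<cdot> (\<phi> \<cdot> g) = (\<psi> \<cdot> \<phi>) \<cdot> g" using assms(2-6) by simp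
  also have "\<dots> = g" using assms by (simp del: comp_assoc)
  finally show ?thesis .
qed

lemma iso_inverse:
  assumes "iso C \<phi>"
  obtains \<psi> where "iso C \<psi>" "\<psi> \<in> Ar C" "Dom C \<psi> = Cod C \<phi>" "Cod C \<psi> = Dom C \<phi>"
    "\<phi> \<cdot> \<psi> = Id C (Dom C \<phi>)" "\<psi> \<cdot> \<phi> = Id C (Cod C \<phi>)"
proof -
  obtain \<psi> where \<psi>: "\<psi> \<in> Ar C" "Dom C \<psi> = Cod C \<phi>" "Cod C \<psi> = Dom C \<phi>"
    "\<phi> \<cdot> \<psi> = Id C (Dom C \<phi>)" "\<psi> \<cdot> \<phi> = Id C (Cod C \<phi>)"
    using isoE[OF assms] by blast
  moreover have "iso C \<psi>"
    by (rule isoI[of _ \<phi>]) (use \<psi> iso_in_Ar[OF assms] in auto)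
  ultimately show thesis using that by blast
qed

lemma iso_comp:
  assumes \<phi>: "iso C \<phi>" and \<chi>: "iso C \<chi>" and "Cod C \<phi> = Dom C \<chi>"
  shows "iso C (\<phi> \<cdot> \<chi>)"
proof -
  obtain \<psi> where \<psi>: "\<psi> \<in> Ar C" "Dom C \<psi> = Cod C \<phi>" "Cod C \<psi> = Dom C \<phi>"
    "\<phi> \<cdot> \<psi> = Id C (Dom C \<phi>)" "\<psi> \<cdot> \<phi> = Id C (Cod C \<phi>)"
    using isoE[OF \<phi>] by blast
  obtain \<omega> where \<omega>: "\<omega> \<in> Ar C" "Dom C \<omega> = Cod C \<chi>" "Cod C \<omega> = Dom C \<chi>"
    "\<chi> \<cdot> \<omega> = Id C (Dom C \<chi>)" "\<omega> \<cdot> \<chi> = Id C (Cod C \<chi>)"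
    using isoE[OF \<chi>] by blast
  note arrows = iso_in_Ar[OF \<phi>] iso_in_Ar[OF \<chi>] \<psi> \<omega> assms(3)
  have "\<chi> \<cdot> (\<omega> \<cdot> \<psi>) = \<psi>"
    by (rule comp_left_inverse_cancel) (use arrows in auto)
  then have right: "(\<phi> \<cdot> \<chi>) \<cdot> (\<omega> \<cdot> \<psi>) = Id C (Dom C (\<phi> \<cdot> \<chi>))"
    using arrows by simp
  have "\<psi> \<cdot> (\<phi> \<cdot> \<chi>) = \<chi>"
    by (rule comp_left_inverse_cancel) (use arrows in auto)
  then have left: "(\<omega> \<cdot> \<psi>) \<cdot> (\<phi> \<cdot> \<chi>) = Id C (Cod C (\<phi> \<cdot> \<chi>))"
    using arrows by simp
  show ?thesis
    by (rule isoI[OF _ _ _ _ right left]) (use arrows in auto)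
qed

lemma pullback_sym: "is_pullback C h f P p q \<Longrightarrow> is_pullback C f h P q p"
  unfolding is_pullback_def by (smt (verit))

lemma pullbackD:
  assumes "is_pullback C h f P p q"
  shows "P \<in> Ob C" "p \<in> Ar C" "Dom C p = P" "Cod C p = Dom C f"
    and "q \<in> Ar C" "Dom C q = P" "Cod C q = Dom C h" "p \<cdot> f = q \<cdot> h"
  using assms unfolding is_pullback_def hom_def by blast+

lemma pullback_factor:
  assumes "is_pullback C h f P p q" and "x \<in> Ar C" "y \<in> Ar C" "Dom C x = Dom C y"
    and "Cod C x = Dom C f" "Cod C y = Dom C h" "x \<cdot> f = y \<cdot> h"
  obtains u where "u \<in> Ar C" "Dom C u = Dom C x" "Cod C u = P" "u \<cdot> p = x" "u \<cdot> q = y"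
proof -
  have "\<exists>!u. hom C u (Dom C x) P \<and> u \<cdot> p = x \<and> u \<cdot> q = y"
    using assms unfolding is_pullback_def hom_def by simp
  then show thesis using that unfolding hom_def by blast
qed

lemma pullback_factor_unique:
  assumes pb: "is_pullback C h f P p q" and "f \<in> Ar C" "h \<in> Ar C"
    and "u \<in> Ar C" "v \<in> Ar C" "Dom C u = Dom C v" "Cod C u = P" "Cod C v = P"
    and "u \<cdot> p = v \<cdot> p" "u \<cdot> q = v \<cdot> q"
  shows "u = v"
proof -
  note legs = pullbackD[OF pb]
  have "(u \<cdot> p) \<cdot> f = (u \<cdot> q) \<cdot> h" using legs assms by simp
  then have "\<exists>!w. hom C w (Dom C u) P \<and> w \<cdot> p = u \<cdot> p \<and> w \<cdot> q = u \<cdot> q"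
    using pb assms legs unfolding is_pullback_def hom_def by simp
  then show ?thesis using assms unfolding hom_def by metis
qed

lemma pullbackI:
  assumes "P \<in> Ob C" "p \<in> Ar C" "Dom C p = P" "Cod C p = Dom C f"
    and "q \<in> Ar C" "Dom C q = P" "Cod C q = Dom C h" "p \<cdot> f = q \<cdot> h"
    and factor: "\<And>x y. x \<in> Ar C \<Longrightarrow> y \<in> Ar C \<Longrightarrow> Dom C x = Dom C y \<Longrightarrow>
      Cod C x = Dom C f \<Longrightarrow> Cod C y = Dom C h \<Longrightarrow> x \<cdot> f = y \<cdot> h \<Longrightarrow>
      \<exists>u. u \<in> Ar C \<and> Dom C u = Dom C x \<and> Cod C u = P \<and> u \<cdot> p = x \<and> u \<cdot> q = y"
    and unique: "\<And>u v. u \<in> Ar C \<Longrightarrow> v \<in> Ar C \<Longrightarrow> Dom C u = Dom C v \<Longrightarrow>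
      Cod C u = P \<Longrightarrow> Cod C v = P \<Longrightarrow> u \<cdot> p = v \<cdot> p \<Longrightarrow> u \<cdot> q = v \<cdot> q \<Longrightarrow> u = v"
  shows "is_pullback C h f P p q"
  unfolding is_pullback_def hom_def
proof (intro conjI allI impI)
  fix Q x y
  assume "Q \<in> Ob C" and x: "x \<in> Ar C \<and> Dom C x = Q \<and> Cod C x = Dom C f"
    and y: "y \<in> Ar C \<and> Dom C y = Q \<and> Cod C y = Dom C h" and "x \<cdot> f = y \<cdot> h"
  then obtain u where "u \<in> Ar C \<and> Dom C u = Q \<and> Cod C u = P \<and> u \<cdot> p = x \<and> u \<cdot> q = y"
    using factor by metis
  then show "\<exists>!u. (u \<in> Ar C \<and> Dom C u = Q \<and> Cod C u = P) \<and> u \<cdot> p = x \<and> u \<cdot> q = y"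
    using unique by (intro ex1I[of _ u]) metis+
qed (use assms in auto)

lemma pullback_unique_iso:
  assumes pb: "is_pullback C h f P p q" and pb': "is_pullback C h f P' p' q'"
    and "f \<in> Ar C" "h \<in> Ar C"
  obtains \<theta> where "iso C \<theta>" "\<theta> \<in> Ar C" "Dom C \<theta> = P" "Cod C \<theta> = P'"
    "\<theta> \<cdot> p' = p" "\<theta> \<cdot> q' = q"
proof -
  note legs = pullbackD[OF pb] and legs' = pullbackD[OF pb']
  obtain \<theta> where \<theta>: "\<theta> \<in> Ar C" "Dom C \<theta> = P" "Cod C \<theta> = P'" "\<theta> \<cdot> p' = p" "\<theta> \<cdot> q' = q"
    using pullback_factor[OF pb', of p q] legs by auto
  obtain \<kappa> where \<kappa>: "\<kappa> \<in> Ar C" "Dom C \<kappa> = P'" "Cod C \<kappa> = P" "\<kappa> \<cdot> p = p'" "\<kappa> \<cdot> q = q'"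
    using pullback_factor[OF pb, of p' q'] legs' by auto
  have "\<theta> \<cdot> \<kappa> = Id C P"
    by (rule pullback_factor_unique[OF pb assms(3,4)]) (use \<theta> \<kappa> legs in simp_all)
  moreover have "\<kappa> \<cdot> \<theta> = Id C P'"
    by (rule pullback_factor_unique[OF pb' assms(3,4)]) (use \<theta> \<kappa> legs' in simp_all)
  ultimately have "iso C \<theta>"
    by (intro isoI[of _ \<kappa>]) (use \<theta> \<kappa> in auto)
  then show thesis using that \<theta> by blast
qed

lemma pullback_precomp_iso:
  assumes pb: "is_pullback C h (\<phi> \<cdot> f) P p q" and "iso C \<phi>"
    and "f \<in> Ar C" "h \<in> Ar C" "Cod C \<phi> = Dom C f"
  shows "is_pullback C h f P (p \<cdot> \<phi>) q"
proof -
  obtain \<psi> where \<psi>: "\<psi> \<in> Ar C" "Dom C \<psi> = Dom C f" "Cod C \<psi> = Dom C \<phi>"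
    "\<phi> \<cdot> \<psi> = Id C (Dom C \<phi>)" "\<psi> \<cdot> \<phi> = Id C (Dom C f)"
    using isoE[OF assms(2)] assms(5) by metis
  have \<phi>: "\<phi> \<in> Ar C" using iso_in_Ar assms(2) by blast
  note arrows = \<phi> \<psi> assms(3-5)
  note legs = pullbackD[OF pb]
  have \<psi>_cancel: "\<psi> \<cdot> (\<phi> \<cdot> f) = f"
    by (rule comp_left_inverse_cancel) (use arrows in auto)
  show ?thesis
  proof (rule pullbackI)
    show "(p \<cdot> \<phi>) \<cdot> f = q \<cdot> h" using legs arrows by simp
  next
    fix x y
    assume x: "x \<in> Ar C" "Cod C x = Dom C f" and y: "y \<in> Ar C" "Dom C x = Dom C y"
      "Cod C y = Dom C h" "x \<cdot> f = y \<cdot> h"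
    have "(x \<cdot> \<psi>) \<cdot> (\<phi> \<cdot> f) = y \<cdot> h" using x y arrows \<psi>_cancel by simp
    then obtain u where u: "u \<in> Ar C" "Dom C u = Dom C x" "Cod C u = P" "u \<cdot> p = x \<cdot> \<psi>" "u \<cdot> q = y"
      using pullback_factor[OF pb, of "x \<cdot> \<psi>" y] x y arrows by auto
    have "u \<cdot> (p \<cdot> \<phi>) = (u \<cdot> p) \<cdot> \<phi>" using u(1-3) legs arrows by simp
    also have "\<dots> = (x \<cdot> \<psi>) \<cdot> \<phi>" using u(4) by simp
    also have "\<dots> = x" using x arrows by simp
    finally show "\<exists>u. u \<in> Ar C \<and> Dom C u = Dom C x \<and> Cod C u = P \<and> u \<cdot> (p \<cdot> \<phi>) = x \<and> u \<cdot> q = y"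
      using u by blast
  next
    fix u v
    assume uv: "u \<in> Ar C" "v \<in> Ar C" "Dom C u = Dom C v" "Cod C u = P" "Cod C v = P"
      and eq: "u \<cdot> (p \<cdot> \<phi>) = v \<cdot> (p \<cdot> \<phi>)" "u \<cdot> q = v \<cdot> q"
    have "u \<cdot> p = (u \<cdot> (p \<cdot> \<phi>)) \<cdot> \<psi>" using uv legs arrows by simp
    also have "\<dots> = (v \<cdot> (p \<cdot> \<phi>)) \<cdot> \<psi>" using eq by simp
    also have "\<dots> = v \<cdot> p" using uv legs arrows by simp
    finally have "u \<cdot> p = v \<cdot> p" .
    with uv eq arrows show "u = v"
      by (intro pullback_factor_unique[OF pb, of u v]) simp_all
  qed (use legs arrows in auto)
qed

lemma pullback_along_id:
  assumes "h \<in> Ar C"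
  shows "is_pullback C h (Id C (Cod C h)) (Dom C h) h (Id C (Dom C h))"
  by (rule pullbackI) (use assms in \<open>auto intro: exI\<close>)

lemma monic_pullback_along_factor:
  assumes "monic C m" "a \<in> Ar C" "Cod C a = Dom C m"
  shows "is_pullback C m (a \<cdot> m) (Dom C a) (Id C (Dom C a)) a"
proof -
  have m: "m \<in> Ar C" using assms(1) unfolding monic_def by blast
  show ?thesis
  proof (rule pullbackI)
    fix x y
    assume x: "x \<in> Ar C" "Cod C x = Dom C (a \<cdot> m)" and y: "y \<in> Ar C" "Dom C x = Dom C y"
      "Cod C y = Dom C m" "x \<cdot> (a \<cdot> m) = y \<cdot> m"
    then have "(x \<cdot> a) \<cdot> m = y \<cdot> m" using m assms by simp
    then have "x \<cdot> a = y"
      using x y m assms unfolding monic_def by simp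
    then show "\<exists>u. u \<in> Ar C \<and> Dom C u = Dom C x \<and> Cod C u = Dom C a \<and>
        u \<cdot> Id C (Dom C a) = x \<and> u \<cdot> a = y"
      using x m assms by (intro exI[of _ x]) simp
  qed (use m assms in auto)
qed

lemma pullback_pasting:
  assumes right: "is_pullback C h g Z z w" and left: "is_pullback C z q T k t"
    and "g \<in> Ar C" "h \<in> Ar C" "q \<in> Ar C" "Cod C q = Dom C g"
  shows "is_pullback C h (q \<cdot> g) T k (t \<cdot> w)"
proof -
  note R = pullbackD[OF right] and L = pullbackD[OF left]
  note ty = assms(3-6) R(1-7) L(1-7)
  show ?thesis
  proof (rule pullbackI)
    have "k \<cdot> (q \<cdot> g) = (k \<cdot> q) \<cdot> g" using ty by simp
    also have "\<dots> = (t \<cdot> z) \<cdot> g" using L(8) by simp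
    also have "\<dots> = t \<cdot> (z \<cdot> g)" using ty by simp
    also have "\<dots> = (t \<cdot> w) \<cdot> h" using R(8) ty by simp
    finally show "k \<cdot> (q \<cdot> g) = (t \<cdot> w) \<cdot> h" .
  next
    fix x y
    assume x: "x \<in> Ar C" "Cod C x = Dom C (q \<cdot> g)" and y: "y \<in> Ar C" "Dom C x = Dom C y"
      "Cod C y = Dom C h" "x \<cdot> (q \<cdot> g) = y \<cdot> h"
    have "(x \<cdot> q) \<cdot> g = y \<cdot> h" using x y ty by simp
    then obtain v where v: "v \<in> Ar C" "Dom C v = Dom C x" "Cod C v = Z" "v \<cdot> z = x \<cdot> q" "v \<cdot> w = y"
      using pullback_factor[OF right, of "x \<cdot> q" y] x y ty by auto
    then obtain u where u: "u \<in> Ar C" "Dom C u = Dom C x" "Cod C u = T" "u \<cdot> k = x" "u \<cdot> t = v"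
      using pullback_factor[OF left, of x v] x ty by auto
    have "u \<cdot> (t \<cdot> w) = (u \<cdot> t) \<cdot> w" using u(1-3) ty by simp
    also have "\<dots> = y" using u(5) v(5) by simp
    finally show "\<exists>u. u \<in> Ar C \<and> Dom C u = Dom C x \<and> Cod C u = T \<and> u \<cdot> k = x \<and> u \<cdot> (t \<cdot> w) = y"
      using u by blast
  next
    fix u v
    assume uv: "u \<in> Ar C" "v \<in> Ar C" "Dom C u = Dom C v" "Cod C u = T" "Cod C v = T"
      and eq: "u \<cdot> k = v \<cdot> k" "u \<cdot> (t \<cdot> w) = v \<cdot> (t \<cdot> w)"
    have "(u \<cdot> t) \<cdot> z = (u \<cdot> k) \<cdot> q" using uv ty L(8) by simp
    also have "\<dots> = (v \<cdot> t) \<cdot> z" using uv ty L(8) eq(1) by simp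
    finally have "(u \<cdot> t) \<cdot> z = (v \<cdot> t) \<cdot> z" .
    moreover have "(u \<cdot> t) \<cdot> w = (v \<cdot> t) \<cdot> w" using uv ty eq(2) by simp
    ultimately have "u \<cdot> t = v \<cdot> t"
      using uv ty by (intro pullback_factor_unique[OF right, of "u \<cdot> t" "v \<cdot> t"]) simp_all
    with uv eq ty show "u = v"
      by (intro pullback_factor_unique[OF left, of u v]) simp_all
  qed (use ty in auto)
qed

lemma pullback_pasting_cancel:
  assumes right: "is_pullback C h g Z z w" and outer: "is_pullback C h (q \<cdot> g) T k s"
    and t: "t \<in> Ar C" "Dom C t = T" "Cod C t = Z" "k \<cdot> q = t \<cdot> z" "t \<cdot> w = s"
    and "g \<in> Ar C" "h \<in> Ar C" "q \<in> Ar C" "Cod C q = Dom C g"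
  shows "is_pullback C z q T k t"
proof -
  note R = pullbackD[OF right] and O = pullbackD[OF outer]
  note ty = assms(8-11) R(1-7) O(1-7) t(1-3)
  show ?thesis
  proof (rule pullbackI)
    fix x y
    assume x: "x \<in> Ar C" "Cod C x = Dom C q" and y: "y \<in> Ar C" "Dom C x = Dom C y"
      "Cod C y = Dom C z" "x \<cdot> q = y \<cdot> z"
    have "x \<cdot> (q \<cdot> g) = (x \<cdot> q) \<cdot> g" using x ty by simp
    also have "\<dots> = (y \<cdot> z) \<cdot> g" using y(4) by simp
    also have "\<dots> = (y \<cdot> w) \<cdot> h" using y ty R(8) by simp
    finally obtain u where u: "u \<in> Ar C" "Dom C u = Dom C x" "Cod C u = T" "u \<cdot> k = x" "u \<cdot> s = y \<cdot> w"
      using pullback_factor[OF outer, of x "y \<cdot> w"] x y ty by auto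
    have "(u \<cdot> t) \<cdot> z = (u \<cdot> k) \<cdot> q" using u(1-3) ty t(4) by simp
    also have "\<dots> = y \<cdot> z" using u(4) y(4) by simp
    finally have "(u \<cdot> t) \<cdot> z = y \<cdot> z" .
    moreover have "(u \<cdot> t) \<cdot> w = y \<cdot> w" using u ty t(5) by simp
    ultimately have "u \<cdot> t = y"
      using u y ty by (intro pullback_factor_unique[OF right, of "u \<cdot> t" y]) simp_all
    then show "\<exists>u. u \<in> Ar C \<and> Dom C u = Dom C x \<and> Cod C u = T \<and> u \<cdot> k = x \<and> u \<cdot> t = y"
      using u by blast
  next
    fix u v
    assume uv: "u \<in> Ar C" "v \<in> Ar C" "Dom C u = Dom C v" "Cod C u = T" "Cod C v = T"
      and eq: "u \<cdot> k = v \<cdot> k" "u \<cdot> t = v \<cdot> t"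
    have "u \<cdot> s = (u \<cdot> t) \<cdot> w" using uv ty t(5) by simp
    also have "\<dots> = v \<cdot> s" using uv ty t(5) eq(2) by simp
    finally show "u = v"
      using uv eq ty by (intro pullback_factor_unique[OF outer, of u v]) simp_all
  qed (use ty t in auto)
qed

end

section \<open>The category R[C]\<close>

locale local_cat =
  fixes C :: "('o, 'm) cat" and L :: "'o \<Rightarrow> 'o" and \<eta> :: "'o \<Rightarrow> 'm"
  assumes local_category: "local_category C L \<eta>"

sublocale local_cat \<subseteq> diagrammatic_category C
  using local_category unfolding local_category_def by unfold_locales blast

context local_cat
begin

lemma L_in_Ob [simp]: "M \<in> Ob C \<Longrightarrow> L M \<in> Ob C"
  and eta_in_Ar [simp]: "M \<in> Ob C \<Longrightarrow> \<eta> M \<in> Ar C"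
  and dom_eta [simp]: "M \<in> Ob C \<Longrightarrow> Dom C (\<eta> M) = M"
  and cod_eta [simp]: "M \<in> Ob C \<Longrightarrow> Cod C (\<eta> M) = L M"
  and L_idem [simp]: "M \<in> Ob C \<Longrightarrow> L (L M) = L M"
  and eta_L [simp]: "M \<in> Ob C \<Longrightarrow> \<eta> (L M) = Id C (L M)"
  and monic_eta: "M \<in> Ob C \<Longrightarrow> monic C (\<eta> M)"
  using local_category unfolding local_category_def hom_def by blast+

text \<open>The pullbacks provided by (L.3), with U = Dom f; R_cat composes along one of them chosen
  by SOME.\<close>

definition local_pullback :: "'o \<Rightarrow> 'm \<Rightarrow> 'o \<Rightarrow> 'o \<Rightarrow> 'm \<Rightarrow> 'm \<Rightarrow> bool" where
  "local_pullback U f V W pU pV \<longleftrightarrow>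
     is_pullback C (\<eta> V) f W pU pV \<and> L W = L U \<and> pU \<cdot> \<eta> U = \<eta> W"

lemma local_pullback_exists:
  assumes "V \<in> Ob C" "f \<in> Ar C" "Dom C f = U" "Cod C f = L V"
  obtains W pU pV where "local_pullback U f V W pU pV"
  using local_category assms unfolding local_category_def local_pullback_def by metis

lemma local_pullbackD:
  assumes "local_pullback U f V W pU pV" "f \<in> Ar C" "Dom C f = U" "V \<in> Ob C"
  shows "W \<in> Ob C" "pU \<in> Ar C" "Dom C pU = W" "Cod C pU = U"
    and "pV \<in> Ar C" "Dom C pV = W" "Cod C pV = V" "pU \<cdot> f = pV \<cdot> \<eta> V"
    and "L W = L U" "pU \<cdot> \<eta> U = \<eta> W" "Cod C f = L V"
proof -
  have pb: "is_pullback C (\<eta> V) f W pU pV" "L W = L U" "pU \<cdot> \<eta> U = \<eta> W"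
    using assms(1) unfolding local_pullback_def by auto
  note legs = pullbackD[OF pb(1)]
  show "W \<in> Ob C" "pU \<in> Ar C" "Dom C pU = W" "Cod C pU = U"
    and "pV \<in> Ar C" "Dom C pV = W" "Cod C pV = V" "pU \<cdot> f = pV \<cdot> \<eta> V"
    and "L W = L U" "pU \<cdot> \<eta> U = \<eta> W"
    using assms legs pb by auto
  have "Cod C f = Cod C (pU \<cdot> f)" using assms legs(1-7) by simp
  also have "\<dots> = Cod C (pV \<cdot> \<eta> V)" using legs(8) by simp
  also have "\<dots> = L V" using assms legs by simp
  finally show "Cod C f = L V" .
qed

abbreviation rp where "rp \<equiv> rpair C L \<eta>"
abbreviation ri where "ri \<equiv> rpair_iso C \<eta>"
abbreviation cl where "cl \<equiv> rcls C L \<eta>"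
abbreviation RR where "RR \<equiv> R_cat C L \<eta>"
abbreviation rst where "rst \<equiv> R_rst C L \<eta>"

lemma rpair_iff:
  "rp (U, f) \<longleftrightarrow> f \<in> Ar C \<and> Dom C f = U \<and> L (Cod C f) = Cod C f \<and> \<eta> (Cod C f) = Id C (Cod C f)"
  unfolding rpair_def total_def hom_def by auto

lemma rpairD:
  assumes "rp (U, f)"
  shows "U \<in> Ob C" "f \<in> Ar C" "Dom C f = U" "total C L \<eta> (Cod C f)"
  using assms unfolding rpair_def hom_def by auto

lemma rpair_eta: "U \<in> Ob C \<Longrightarrow> rp (U, \<eta> U)"
  unfolding rpair_iff by simp

lemma rpair_id: "total C L \<eta> M \<Longrightarrow> rp (M, Id C M)"
  unfolding rpair_iff total_def by auto

lemma rpair_local_pullback: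
  assumes "local_pullback U f V W pU pV" "rp (U, f)" "rp (V, g)"
  shows "rp (W, pV \<cdot> g)"
  using local_pullbackD[OF assms(1) rpairD(2,3)[OF assms(2)] rpairD(1)[OF assms(3)]] assms(3)
  unfolding rpair_iff by auto

lemma rpair_iso_iff:
  "ri (U, f) (V, g) \<longleftrightarrow>
     (\<exists>\<phi>. iso C \<phi> \<and> \<phi> \<in> Ar C \<and> Dom C \<phi> = U \<and> Cod C \<phi> = V \<and> \<phi> \<cdot> \<eta> V = \<eta> U \<and> \<phi> \<cdot> g = f)"
  unfolding rpair_iso_def hom_def by auto

lemma rpair_iso_refl: "rp (U, f) \<Longrightarrow> ri (U, f) (U, f)"
  unfolding rpair_iff rpair_iso_iff using iso_id by (intro exI[of _ "Id C U"]) auto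

lemma rpair_iso_sym:
  assumes "rp (U, f)" "rp (V, g)" "ri (U, f) (V, g)"
  shows "ri (V, g) (U, f)"
proof -
  obtain \<phi> where \<phi>: "iso C \<phi>" "\<phi> \<in> Ar C" "Dom C \<phi> = U" "Cod C \<phi> = V" "\<phi> \<cdot> \<eta> V = \<eta> U" "\<phi> \<cdot> g = f"
    using assms(3) unfolding rpair_iso_iff by blast
  obtain \<psi> where \<psi>: "iso C \<psi>" "\<psi> \<in> Ar C" "Dom C \<psi> = V" "Cod C \<psi> = U" "\<psi> \<cdot> \<phi> = Id C V"
    using iso_inverse[OF \<phi>(1)] \<phi> by metis
  note ty = \<phi>(2-4) \<psi>(2-4) rpairD[OF assms(1)] rpairD[OF assms(2)]
  have "\<psi> \<cdot> \<eta> U = \<eta> V"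
    using comp_left_inverse_cancel[of \<psi> \<phi> "\<eta> V"] \<phi>(5) \<psi>(5) ty by simp
  moreover have "\<psi> \<cdot> f = g"
    using comp_left_inverse_cancel[of \<psi> \<phi> g] \<phi>(6) \<psi>(5) ty by simp
  ultimately show ?thesis
    unfolding rpair_iso_iff using \<psi> by blast
qed

lemma rpair_iso_trans:
  assumes "rp (U, f)" "rp (V, g)" "rp (X, h)" "ri (U, f) (V, g)" "ri (V, g) (X, h)"
  shows "ri (U, f) (X, h)"
proof -
  obtain \<phi> where \<phi>: "iso C \<phi>" "\<phi> \<in> Ar C" "Dom C \<phi> = U" "Cod C \<phi> = V" "\<phi> \<cdot> \<eta> V = \<eta> U" "\<phi> \<cdot> g = f"
    using assms(4) unfolding rpair_iso_iff by blast
  obtain \<chi> where \<chi>: "iso C \<chi>" "\<chi> \<in> Ar C" "Dom C \<chi> = V" "Cod C \<chi> = X" "\<chi> \<cdot> \<eta> X = \<eta> V" "\<chi> \<cdot> h = g"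
    using assms(5) unfolding rpair_iso_iff by blast
  note ty = rpairD[OF assms(1)] rpairD[OF assms(2)] rpairD[OF assms(3)]
  have "iso C (\<phi> \<cdot> \<chi>)" using iso_comp \<phi> \<chi> by simp
  then show ?thesis
    unfolding rpair_iso_iff using \<phi> \<chi> ty by (intro exI[of _ "\<phi> \<cdot> \<chi>"]) auto
qed

lemma rpair_iso_L:
  assumes "rp (U, f)" "rp (V, g)" "ri (U, f) (V, g)"
  shows "L U = L V"
proof -
  obtain \<phi> where \<phi>: "\<phi> \<in> Ar C" "Dom C \<phi> = U" "Cod C \<phi> = V" "\<phi> \<cdot> \<eta> V = \<eta> U"
    using assms(3) unfolding rpair_iso_iff by blast
  have "L V = Cod C (\<phi> \<cdot> \<eta> V)" using \<phi>(1-3) rpairD(1)[OF assms(2)] by simp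
  also have "\<dots> = L U" using \<phi>(4) rpairD(1)[OF assms(1)] by simp
  finally show ?thesis by simp
qed

lemma rpair_iso_cod:
  assumes "rp (V, g)" "ri (U, f) (V, g)"
  shows "Cod C f = Cod C g"
proof -
  obtain \<phi> where "\<phi> \<in> Ar C" "Cod C \<phi> = V" "\<phi> \<cdot> g = f"
    using assms(2) unfolding rpair_iso_iff by blast
  then show ?thesis using rpairD[OF assms(1)] by (metis cod_comp)
qed

lemma rcls_eq:
  assumes "rp (U, f)" "rp (V, g)" "ri (U, f) (V, g)"
  shows "cl (U, f) = cl (V, g)"
proof -
  have "ri q (U, f) \<longleftrightarrow> ri q (V, g)" if "rp q" for q
    using rpair_iso_trans rpair_iso_sym assms that by (metis prod.exhaust)
  then show ?thesis
    unfolding rcls_def using rpair_iso_L[OF assms] by auto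
qed

lemma rrep_rcls:
  assumes "rp (U, f)"
  obtains U0 f0 where "rrep C L \<eta> (cl (U, f)) = (U0, f0)" "rp (U0, f0)" "ri (U0, f0) (U, f)"
proof -
  obtain U0 f0 where r: "rrep C L \<eta> (cl (U, f)) = (U0, f0)" by fastforce
  have "rp (rrep C L \<eta> (cl (U, f))) \<and> cl (U, f) = cl (rrep C L \<eta> (cl (U, f)))"
    unfolding rrep_def by (rule someI[of _ "(U, f)"]) (use assms in auto)
  then have "rp (U0, f0)" "cl (U, f) = cl (U0, f0)" using r by simp_all
  moreover have "(U0, f0) \<in> cl (U0, f0)"
    unfolding rcls_def using rpair_iso_refl \<open>rp (U0, f0)\<close> by simp
  ultimately show thesis using that r unfolding rcls_def by blast
qed

lemma Ob_R_iff: "M \<in> Ob RR \<longleftrightarrow> total C L \<eta> M"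
  unfolding R_cat_def by simp

lemma Id_R: "Id RR M = cl (M, Id C M)"
  unfolding R_cat_def by simp

lemma rcls_in_Ar_R: "rp (U, f) \<Longrightarrow> cl (U, f) \<in> Ar RR"
  unfolding R_cat_def by auto

lemma Ar_RE:
  assumes "a \<in> Ar RR"
  obtains U f where "rp (U, f)" "a = cl (U, f)"
  using assms unfolding R_cat_def by auto

lemma Dom_R_rcls: "rp (U, f) \<Longrightarrow> Dom RR (cl (U, f)) = L U"
  by (rule rrep_rcls) (auto simp: R_cat_def dest: rpair_iso_L)

lemma Cod_R_rcls: "rp (U, f) \<Longrightarrow> Cod RR (cl (U, f)) = Cod C f"
  by (rule rrep_rcls) (auto simp: R_cat_def dest: rpair_iso_cod)

lemma R_rst_rcls:
  assumes "rp (U, f)"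
  shows "rst (cl (U, f)) = cl (U, \<eta> U)"
proof -
  obtain U0 f0 where r: "rrep C L \<eta> (cl (U, f)) = (U0, f0)" "rp (U0, f0)" "ri (U0, f0) (U, f)"
    using rrep_rcls[OF assms] by blast
  then have "ri (U0, \<eta> U0) (U, \<eta> U)"
    unfolding rpair_iso_iff by blast
  then have "cl (U0, \<eta> U0) = cl (U, \<eta> U)"
    using rcls_eq rpair_eta rpairD(1) assms r(2) by blast
  then show ?thesis unfolding R_rst_def r(1) by simp
qed

lemma Comp_R_rrep:
  assumes "rp (U, f)" "rp (V, g)" "Cod C f = L V"
  obtains U0 f0 V0 g0 W0 pU0 pV0 where "rp (U0, f0)" "ri (U0, f0) (U, f)"
    "rp (V0, g0)" "ri (V0, g0) (V, g)" "local_pullback U0 f0 V0 W0 pU0 pV0"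
    "Comp RR (cl (U, f)) (cl (V, g)) = cl (W0, pV0 \<cdot> g0)"
proof -
  obtain U0 f0 where r1: "rrep C L \<eta> (cl (U, f)) = (U0, f0)" "rp (U0, f0)" "ri (U0, f0) (U, f)"
    using rrep_rcls[OF assms(1)] by blast
  obtain V0 g0 where r2: "rrep C L \<eta> (cl (V, g)) = (V0, g0)" "rp (V0, g0)" "ri (V0, g0) (V, g)"
    using rrep_rcls[OF assms(2)] by blast
  define P where "P = (\<lambda>(W, pU, pV). local_pullback U0 f0 V0 W pU pV)"
  have "Cod C f0 = L V0"
    using rpair_iso_cod[OF assms(1) r1(3)] rpair_iso_L[OF r2(2) assms(2) r2(3)] assms(3) by simp
  then obtain W pU pV where "local_pullback U0 f0 V0 W pU pV"
    using local_pullback_exists[OF rpairD(1)[OF r2(2)] rpairD(2,3)[OF r1(2)]] by blast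
  then have "P (W, pU, pV)" unfolding P_def by simp
  then have "P (SOME x. P x)" by (rule someI)
  moreover obtain W0 pU0 pV0 where s: "(SOME x. P x) = (W0, pU0, pV0)" by (rule prod_cases3)
  ultimately have "local_pullback U0 f0 V0 W0 pU0 pV0" unfolding P_def by simp
  moreover have "Comp RR (cl (U, f)) (cl (V, g)) = cl (W0, pV0 \<cdot> g0)"
    using r1(1) r2(1) s unfolding R_cat_def P_def local_pullback_def by simp
  ultimately show thesis using that r1 r2 by blast
qed

lemma local_pullback_rpair_iso:
  assumes "rp (U, f)" "rp (V, g)" "rp (U0, f0)" "rp (V0, g0)"
    and "ri (U, f) (U0, f0)" "ri (V, g) (V0, g0)"
    and W: "local_pullback U f V W pU pV" and W0: "local_pullback U0 f0 V0 W0 pU0 pV0"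
  shows "ri (W, pV \<cdot> g) (W0, pV0 \<cdot> g0)"
proof -
  obtain \<phi> where \<phi>: "iso C \<phi>" "\<phi> \<in> Ar C" "Dom C \<phi> = U" "Cod C \<phi> = U0"
      "\<phi> \<cdot> \<eta> U0 = \<eta> U" "\<phi> \<cdot> f0 = f"
    using assms(5) unfolding rpair_iso_iff by blast
  obtain \<psi> where \<psi>: "iso C \<psi>" "\<psi> \<in> Ar C" "Dom C \<psi> = V" "Cod C \<psi> = V0"
      "\<psi> \<cdot> \<eta> V0 = \<eta> V" "\<psi> \<cdot> g0 = g"
    using assms(6) unfolding rpair_iso_iff by blast
  note U = rpairD[OF assms(1)] and V = rpairD[OF assms(2)]
    and U0 = rpairD[OF assms(3)] and V0 = rpairD[OF assms(4)]
  note P = local_pullbackD[OF W U(2,3) V(1)] and P0 = local_pullbackD[OF W0 U0(2,3) V0(1)]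
  have "is_pullback C (\<eta> V) (\<phi> \<cdot> f0) W pU pV"
    using W \<phi>(6) unfolding local_pullback_def by simp
  then have "is_pullback C (\<eta> V) f0 W (pU \<cdot> \<phi>) pV"
    by (rule pullback_precomp_iso) (use \<phi> U0 V in auto)
  then have "is_pullback C f0 (\<psi> \<cdot> \<eta> V0) W pV (pU \<cdot> \<phi>)"
    using \<psi>(5) by (simp add: pullback_sym)
  then have "is_pullback C f0 (\<eta> V0) W (pV \<cdot> \<psi>) (pU \<cdot> \<phi>)"
    by (rule pullback_precomp_iso) (use \<psi> U0 V0 in auto)
  moreover have "is_pullback C (\<eta> V0) f0 W0 pU0 pV0"
    using W0 unfolding local_pullback_def by simp
  ultimately obtain \<theta> where \<theta>: "iso C \<theta>" "\<theta> \<in> Ar C" "Dom C \<theta> = W" "Cod C \<theta> = W0"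
      "\<theta> \<cdot> pU0 = pU \<cdot> \<phi>" "\<theta> \<cdot> pV0 = pV \<cdot> \<psi>"
    using pullback_unique_iso[OF pullback_sym] U0 V0 by (metis eta_in_Ar)
  note ty = \<phi>(2-4) \<psi>(2-4) \<theta>(2-4) U V U0 V0 P(1-7) P0(1-7)
  have "\<theta> \<cdot> \<eta> W0 = (\<theta> \<cdot> pU0) \<cdot> \<eta> U0" using ty P0(10) by simp
  also have "\<dots> = pU \<cdot> (\<phi> \<cdot> \<eta> U0)" using ty \<theta>(5) by simp
  also have "\<dots> = \<eta> W" using \<phi>(5) P(10) by simp
  finally have "\<theta> \<cdot> \<eta> W0 = \<eta> W" .
  moreover have "\<theta> \<cdot> (pV0 \<cdot> g0) = pV \<cdot> g"
  proof -
    have "\<theta> \<cdot> (pV0 \<cdot> g0) = (\<theta> \<cdot> pV0) \<cdot> g0" using ty by simp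
    also have "\<dots> = pV \<cdot> g" using ty \<theta>(6) \<psi>(6) by simp
    finally show ?thesis .
  qed
  ultimately show ?thesis
    unfolding rpair_iso_iff using \<theta> by auto
qed

lemma Comp_R_rcls:
  assumes "rp (U, f)" "rp (V, g)" "local_pullback U f V W pU pV"
  shows "Comp RR (cl (U, f)) (cl (V, g)) = cl (W, pV \<cdot> g)"
proof -
  have "Cod C f = L V"
    using local_pullbackD(11)[OF assms(3) rpairD(2,3)[OF assms(1)] rpairD(1)[OF assms(2)]] .
  then obtain U0 f0 V0 g0 W0 pU0 pV0 where r: "rp (U0, f0)" "ri (U0, f0) (U, f)"
      "rp (V0, g0)" "ri (V0, g0) (V, g)" and W0: "local_pullback U0 f0 V0 W0 pU0 pV0"
      and comp: "Comp RR (cl (U, f)) (cl (V, g)) = cl (W0, pV0 \<cdot> g0)"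
    using Comp_R_rrep[OF assms(1,2)] by blast
  have "ri (W, pV \<cdot> g) (W0, pV0 \<cdot> g0)"
    using local_pullback_rpair_iso[OF assms(1,2) r(1,3) _ _ assms(3) W0]
      rpair_iso_sym r assms(1,2) by blast
  then show ?thesis
    using comp rcls_eq rpair_local_pullback assms W0 r by metis
qed

lemma composable_R_E:
  assumes "a \<in> Ar RR" "b \<in> Ar RR" "Cod RR a = Dom RR b"
  obtains U f V g W pU pV where "rp (U, f)" "rp (V, g)" "a = cl (U, f)" "b = cl (V, g)"
    "local_pullback U f V W pU pV"
proof -
  obtain U f V g where a: "rp (U, f)" "a = cl (U, f)" and b: "rp (V, g)" "b = cl (V, g)"
    using Ar_RE assms(1,2) by metis
  then have "Cod C f = L V" using assms(3) Dom_R_rcls Cod_R_rcls by simp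
  then obtain W pU pV where "local_pullback U f V W pU pV"
    using local_pullback_exists rpairD a b by metis
  then show thesis using that a b by blast
qed

lemma Dom_R_in_Ob: "a \<in> Ar RR \<Longrightarrow> Dom RR a \<in> Ob RR"
  by (erule Ar_RE) (simp add: Dom_R_rcls Ob_R_iff total_def rpairD(1))

lemma Cod_R_in_Ob: "a \<in> Ar RR \<Longrightarrow> Cod RR a \<in> Ob RR"
  by (erule Ar_RE) (simp add: Cod_R_rcls Ob_R_iff rpairD(4))

lemma Id_R_hom: "M \<in> Ob RR \<Longrightarrow> hom RR (Id RR M) M M"
  using rpair_id[of M] rcls_in_Ar_R Dom_R_rcls Cod_R_rcls
  unfolding Ob_R_iff Id_R hom_def total_def by auto

lemma Comp_R_hom:
  assumes "a \<in> Ar RR" "b \<in> Ar RR" "Cod RR a = Dom RR b"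
  shows "hom RR (Comp RR a b) (Dom RR a) (Cod RR b)"
proof -
  obtain U f V g W pU pV where "rp (U, f)" "rp (V, g)" "a = cl (U, f)" "b = cl (V, g)"
      and W: "local_pullback U f V W pU pV"
    using composable_R_E[OF assms] .
  moreover note local_pullbackD[OF W rpairD(2,3)[OF \<open>rp (U, f)\<close>] rpairD(1)[OF \<open>rp (V, g)\<close>]]
  ultimately show ?thesis
    unfolding hom_def using Comp_R_rcls rpair_local_pullback rcls_in_Ar_R Dom_R_rcls Cod_R_rcls rpairD
    by simp
qed

lemma local_pullback_id_left:
  assumes "U \<in> Ob C"
  shows "local_pullback (L U) (Id C (L U)) U U (\<eta> U) (Id C U)"
  using pullback_along_id[of "\<eta> U"] assms unfolding local_pullback_def by simp

lemma local_pullback_id_right: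
  assumes "rp (U, f)"
  shows "local_pullback U f (Cod C f) U (Id C U) f"
  using pullback_sym[OF pullback_along_id[of f]] rpairD[OF assms]
  unfolding local_pullback_def total_def by simp

lemma Comp_R_Id_left:
  assumes "a \<in> Ar RR"
  shows "Comp RR (Id RR (Dom RR a)) a = a"
proof -
  obtain U f where a: "rp (U, f)" "a = cl (U, f)" using Ar_RE assms by blast
  have "rp (L U, Id C (L U))" using rpair_id rpairD(1)[OF a(1)] by (simp add: total_def)
  then show ?thesis
    using Comp_R_rcls[OF _ a(1) local_pullback_id_left] rpairD[OF a(1)]
    unfolding Id_R Dom_R_rcls[OF a(1)] a(2) by simp
qed

lemma Comp_R_Id_right:
  assumes "a \<in> Ar RR"
  shows "Comp RR a (Id RR (Cod RR a)) = a"
proof -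
  obtain U f where a: "rp (U, f)" "a = cl (U, f)" using Ar_RE assms by blast
  have "rp (Cod C f, Id C (Cod C f))" using rpair_id rpairD(4)[OF a(1)] by simp
  then show ?thesis
    using Comp_R_rcls[OF a(1) _ local_pullback_id_right[OF a(1)]] rpairD[OF a(1)]
    unfolding Id_R Cod_R_rcls[OF a(1)] a(2) by (simp add: total_def)
qed

text \<open>As \<eta>_Z = z_V \<eta>_V, T is a pullback of z_V \<eta>_V along f; cancelling the square W
  exhibits T as a pullback of z_V along p_V, and pasting Z onto it gives the square for the
  composite (W, p_V g).\<close>

lemma local_pullback_assoc:
  assumes f: "f \<in> Ar C" "Dom C f = U" and g: "g \<in> Ar C" "Dom C g = V" and "V \<in> Ob C" "X \<in> Ob C"
    and W: "local_pullback U f V W pU pV" and Z: "local_pullback V g X Z zV zX"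
    and T: "local_pullback U f Z T tU tZ"
  obtains k where "local_pullback W (pV \<cdot> g) X T k (tZ \<cdot> zX)"
proof -
  note PW = local_pullbackD[OF W f \<open>V \<in> Ob C\<close>] and PZ = local_pullbackD[OF Z g \<open>X \<in> Ob C\<close>]
  note PT = local_pullbackD[OF T f PZ(1)]
  have "U \<in> Ob C" using f by auto
  note ty = f g assms(5,6) \<open>U \<in> Ob C\<close> PW(1-7) PZ(1-7) PT(1-7)
  have pbW: "is_pullback C (\<eta> V) f W pU pV" and pbZ: "is_pullback C (\<eta> X) g Z zV zX"
    and pbT: "is_pullback C (zV \<cdot> \<eta> V) f T tU tZ"
    using W Z T PZ(10) unfolding local_pullback_def by simp_all
  have "tU \<cdot> f = tZ \<cdot> (zV \<cdot> \<eta> V)" using pullbackD(8)[OF pbT] .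
  then obtain k where k: "k \<in> Ar C" "Dom C k = T" "Cod C k = W" "k \<cdot> pU = tU" "k \<cdot> pV = tZ \<cdot> zV"
    using pullback_factor[OF pbW, of tU "tZ \<cdot> zV"] ty by auto
  have "is_pullback C pV zV T tZ k"
    by (rule pullback_pasting_cancel[OF pullback_sym[OF pbW] pullback_sym[OF pbT]])
      (use k ty in auto)
  then have "is_pullback C zV pV T k tZ" by (rule pullback_sym)
  then have "is_pullback C (\<eta> X) (pV \<cdot> g) T k (tZ \<cdot> zX)"
    by (rule pullback_pasting[OF pbZ]) (use ty in auto)
  moreover have "k \<cdot> \<eta> W = \<eta> T"
  proof -
    have "k \<cdot> \<eta> W = (k \<cdot> pU) \<cdot> \<eta> U" using PW(10) k(1-3) ty by simp
    also have "\<dots> = \<eta> T" using k(4) PT(10) by simp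
    finally show ?thesis .
  qed
  ultimately have "local_pullback W (pV \<cdot> g) X T k (tZ \<cdot> zX)"
    unfolding local_pullback_def using PW(9) PT(9) by simp
  then show thesis by (rule that)
qed

lemma Comp_R_assoc:
  assumes "a \<in> Ar RR" "b \<in> Ar RR" "c \<in> Ar RR" "Cod RR a = Dom RR b" "Cod RR b = Dom RR c"
  shows "Comp RR (Comp RR a b) c = Comp RR a (Comp RR b c)"
proof -
  obtain U f V g X h where a: "rp (U, f)" "a = cl (U, f)" and b: "rp (V, g)" "b = cl (V, g)"
      and c: "rp (X, h)" "c = cl (X, h)"
    using Ar_RE assms(1-3) by metis
  note ty = rpairD[OF a(1)] rpairD[OF b(1)] rpairD[OF c(1)]
  have "Cod C f = L V" "Cod C g = L X"
    using assms(4,5) a b c Dom_R_rcls Cod_R_rcls by simp_all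
  then obtain W pU pV Z zV zX where W: "local_pullback U f V W pU pV"
      and Z: "local_pullback V g X Z zV zX"
    using local_pullback_exists ty by metis
  have "L Z = L V" using local_pullbackD(9)[OF Z] ty by simp
  then obtain T tU tZ where T: "local_pullback U f Z T tU tZ"
    using local_pullback_exists local_pullbackD(1)[OF Z] ty \<open>Cod C f = L V\<close> by metis
  obtain k where TW: "local_pullback W (pV \<cdot> g) X T k (tZ \<cdot> zX)"
    using local_pullback_assoc ty W Z T by metis
  have rW: "rp (W, pV \<cdot> g)" and rZ: "rp (Z, zX \<cdot> h)"
    using rpair_local_pullback W Z a b c by blast+
  have "Comp RR (Comp RR a b) c = cl (T, (tZ \<cdot> zX) \<cdot> h)"
    using Comp_R_rcls[OF rW c(1) TW] Comp_R_rcls[OF a(1) b(1) W] a b c by simp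
  also have "\<dots> = cl (T, tZ \<cdot> (zX \<cdot> h))"
    using local_pullbackD[OF T ty(2,3) local_pullbackD(1)[OF Z ty(6,7,9)]]
      local_pullbackD[OF Z ty(6,7,9)] ty by simp
  also have "\<dots> = Comp RR a (Comp RR b c)"
    using Comp_R_rcls[OF a(1) rZ T] Comp_R_rcls[OF b(1) c(1) Z] a b c by simp
  finally show ?thesis .
qed

lemma category_R: "category RR"
  unfolding category_def
  by (intro conjI ballI impI Dom_R_in_Ob Cod_R_in_Ob Id_R_hom Comp_R_hom Comp_R_Id_left
      Comp_R_Id_right Comp_R_assoc; assumption)

section \<open>The restriction structure\<close>

lemma local_pullback_eta_factor:
  assumes "a \<in> Ar C" "Cod C a = U" "a \<cdot> \<eta> U = \<eta> (Dom C a)"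
  shows "local_pullback (Dom C a) (\<eta> (Dom C a)) U (Dom C a) (Id C (Dom C a)) a"
  using monic_pullback_along_factor[OF monic_eta[of U] assms(1)] assms
  unfolding local_pullback_def by auto

lemma local_pullback_eta_sym:
  assumes "local_pullback U (\<eta> U) V W pU pV" "U \<in> Ob C" "V \<in> Ob C" "L U = L V"
  shows "local_pullback V (\<eta> V) U W pV pU"
  using assms local_pullbackD[OF assms(1)] pullback_sym
  unfolding local_pullback_def by auto

lemma R_rst_hom: "a \<in> Ar RR \<Longrightarrow> hom RR (rst a) (Dom RR a) (Dom RR a)"
  by (erule Ar_RE)
    (simp add: hom_def R_rst_rcls rpair_eta rpairD rcls_in_Ar_R Dom_R_rcls Cod_R_rcls)

lemma Comp_R_rst_self:
  assumes "a \<in> Ar RR"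
  shows "Comp RR (rst a) a = a"
proof -
  obtain U f where a: "rp (U, f)" "a = cl (U, f)" using Ar_RE assms by blast
  note ty = rpairD[OF a(1)]
  have "local_pullback U (\<eta> U) U U (Id C U) (Id C U)"
    using local_pullback_eta_factor[of "Id C U" U] ty by simp
  then show ?thesis
    using Comp_R_rcls[OF rpair_eta a(1)] ty unfolding R_rst_rcls[OF a(1)] a(2) by simp
qed

lemma R_rst_commute:
  assumes "a \<in> Ar RR" "b \<in> Ar RR" "Dom RR a = Dom RR b"
  shows "Comp RR (rst a) (rst b) = Comp RR (rst b) (rst a)"
proof -
  obtain U f V g where a: "rp (U, f)" "a = cl (U, f)" and b: "rp (V, g)" "b = cl (V, g)"
    using Ar_RE assms(1,2) by metis
  note ty = rpairD[OF a(1)] rpairD[OF b(1)]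
  have "L U = L V" using assms(3) a b Dom_R_rcls by simp
  then obtain W pU pV where W: "local_pullback U (\<eta> U) V W pU pV"
    using local_pullback_exists ty by (metis cod_eta dom_eta eta_in_Ar)
  then have W': "local_pullback V (\<eta> V) U W pV pU"
    using local_pullback_eta_sym ty \<open>L U = L V\<close> by blast
  have "pV \<cdot> \<eta> V = pU \<cdot> \<eta> U" using local_pullbackD(8)[OF W] ty by simp
  then show ?thesis
    using Comp_R_rcls[OF rpair_eta rpair_eta W] Comp_R_rcls[OF rpair_eta rpair_eta W'] ty
    unfolding a(2) b(2) R_rst_rcls[OF a(1)] R_rst_rcls[OF b(1)] by simp
qed

lemma R_rst_Comp_rst:
  assumes "a \<in> Ar RR" "b \<in> Ar RR" "Dom RR a = Dom RR b"
  shows "Comp RR (rst b) (rst a) = rst (Comp RR (rst b) a)"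
proof -
  obtain U f V g where a: "rp (U, f)" "a = cl (U, f)" and b: "rp (V, g)" "b = cl (V, g)"
    using Ar_RE assms(1,2) by metis
  note ty = rpairD[OF a(1)] rpairD[OF b(1)]
  have "L V = L U" using assms(3) a b Dom_R_rcls by simp
  then obtain W pV pU where W: "local_pullback V (\<eta> V) U W pV pU"
    using local_pullback_exists ty by (metis cod_eta dom_eta eta_in_Ar)
  note P = local_pullbackD[OF W _ _ ty(1)]
  have "Comp RR (rst b) (rst a) = cl (W, pU \<cdot> \<eta> U)"
    using Comp_R_rcls[OF rpair_eta rpair_eta W] ty unfolding a(2) b(2) R_rst_rcls[OF a(1)] R_rst_rcls[OF b(1)] by simp
  also have "\<dots> = rst (cl (W, pU \<cdot> f))"
    using R_rst_rcls[OF rpair_local_pullback[OF W rpair_eta a(1)]] P ty by simp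
  also have "\<dots> = rst (Comp RR (rst b) a)"
    using Comp_R_rcls[OF rpair_eta a(1) W] ty unfolding b(2) a(2) R_rst_rcls[OF b(1)] by simp
  finally show ?thesis .
qed

lemma Comp_R_rst:
  assumes "a \<in> Ar RR" "b \<in> Ar RR" "Cod RR a = Dom RR b"
  shows "Comp RR a (rst b) = Comp RR (rst (Comp RR a b)) a"
proof -
  obtain U f V g W pU pV where a: "rp (U, f)" "a = cl (U, f)" and b: "rp (V, g)" "b = cl (V, g)"
      and W: "local_pullback U f V W pU pV"
    using composable_R_E[OF assms] by metis
  note ty = rpairD[OF a(1)] rpairD[OF b(1)]
  note P = local_pullbackD[OF W ty(2,3) ty(5)]
  have rW: "rp (W, pV \<cdot> g)" using rpair_local_pullback[OF W a(1) b(1)] .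
  have "local_pullback W (\<eta> W) U W (Id C W) pU"
    using local_pullback_eta_factor[of pU U] P by simp
  then have "Comp RR (cl (W, \<eta> W)) a = cl (W, pU \<cdot> f)"
    using Comp_R_rcls[OF rpair_eta a(1)] P ty unfolding a(2) by simp
  moreover have "Comp RR a b = cl (W, pV \<cdot> g)"
    using Comp_R_rcls[OF a(1) b(1) W] unfolding a(2) b(2) .
  moreover have "Comp RR a (rst b) = cl (W, pV \<cdot> \<eta> V)"
    using Comp_R_rcls[OF a(1) rpair_eta W] ty unfolding b(2) R_rst_rcls[OF b(1)] a(2) by simp
  ultimately show ?thesis
    using R_rst_rcls[OF rW] P(8) by simp
qed

end


theorem proposition4p5:
  fixes C :: "('o, 'm) cat" and L :: "'o \<Rightarrow> 'o" and \<eta> :: "'o \<Rightarrow> 'm"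
  assumes "local_category C L \<eta>"
  shows "restriction_category (R_cat C L \<eta>) (R_rst C L \<eta>)"
proof -
  interpret local_cat C L \<eta> by (rule local_cat.intro[OF assms])
  show ?thesis
    unfolding restriction_category_def
    by (intro conjI ballI impI category_R R_rst_hom Comp_R_rst_self R_rst_commute
        R_rst_Comp_rst Comp_R_rst; assumption)
qed

end
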